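(* Let $P$ be a finite poset, $R$ a commutative unital ring, and $D$ a derivation of $I^3(P,R)$. Then for all $x<z<y$ in $P$, $D(e_{xzy})=0$.
   Context: For a finite poset $P$, $P^3_\le=\{(x,y,z)\in P^3: x\le y\le z\}$, and $I^3(P,R)$ is the $R$-module of functions $f:P^3_\le\to R$ with multiplication $(fg)(x_1,x_2,x_3)=\sum f(x_1,y_1,y_2)g(y_1,y_2,x_3)$ over all $x_1\le y_1\le x_2\le y_2\le x_3$. For $x\le y\le z$, $e_{xyz}$ is the function equal to $1$ at $(x,y,z)$ and $0$ elsewhere. A derivation is an $R$-linear map $D:I^3(P,R)\to I^3(P,R)$ with $D(fg)=D(f)g+fD(g)$. *)

theory Defs
  imports Main
begin

type_synonym ('a, 'r) fun3 = "'a \<Rightarrow> 'a \<Rightarrow> 'a \<Rightarrow> 'r"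

definition I3 :: "('a::{finite,order}, 'r::comm_ring_1) fun3 set" where
  "I3 = {f. \<forall>x y z. \<not> (x \<le> y \<and> y \<le> z) \<longrightarrow> f x y z = 0}"

definition mult3 :: "('a::{finite,order}, 'r::comm_ring_1) fun3 \<Rightarrow> ('a, 'r) fun3 \<Rightarrow> ('a, 'r) fun3" where
  "mult3 f g = (\<lambda>x1 x2 x3.
     if x1 \<le> x2 \<and> x2 \<le> x3 then
       (\<Sum>(y1, y2) \<in> {(y1, y2). x1 \<le> y1 \<and> y1 \<le> x2 \<and> x2 \<le> y2 \<and> y2 \<le> x3}.
          f x1 y1 y2 * g y1 y2 x3)
     else 0)"

definition add3 :: "('a, 'r::comm_ring_1) fun3 \<Rightarrow> ('a, 'r) fun3 \<Rightarrow> ('a, 'r) fun3" where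
  "add3 f g = (\<lambda>x y z. f x y z + g x y z)"

definition smult3 :: "'r::comm_ring_1 \<Rightarrow> ('a, 'r) fun3 \<Rightarrow> ('a, 'r) fun3" where
  "smult3 r f = (\<lambda>x y z. r * f x y z)"

definition zero3 :: "('a, 'r::comm_ring_1) fun3" where
  "zero3 = (\<lambda>x y z. 0)"

definition e3 :: "'a::{finite,order} \<Rightarrow> 'a \<Rightarrow> 'a \<Rightarrow> ('a, 'r::comm_ring_1) fun3" where
  "e3 x y z = (\<lambda>a b c. if a = x \<and> b = y \<and> c = z then 1 else 0)"

definition derivation3 :: "(('a::{finite,order}, 'r::comm_ring_1) fun3 \<Rightarrow> ('a, 'r) fun3) \<Rightarrow> bool" where
  "derivation3 D \<longleftrightarrow>
     (\<forall>f \<in> I3. D f \<in> I3) \<and>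
     (\<forall>f \<in> I3. \<forall>g \<in> I3. D (add3 f g) = add3 (D f) (D g)) \<and>
     (\<forall>r. \<forall>f \<in> I3. D (smult3 r f) = smult3 r (D f)) \<and>
     (\<forall>f \<in> I3. \<forall>g \<in> I3. D (mult3 f g) = add3 (mult3 (D f) g) (mult3 f (D g)))"

end

theory Submission
  imports Defs
begin

text \<open>Since e_xzy = e_xzz e_zzy, the Leibniz rule expresses D(e_xzy) through the values
  D(e_xzz)(p,z,z) and D(e_zzy)(z,z,r). For p \<noteq> x the first vanishes because e_ppz e_xzz = 0,
  and symmetrically for the second. The remaining values D(e_xzz)(x,z,z) and D(e_xxz)(x,x,z)
  vanish because of e_xxz e_xzz = \<Sum>{e_xtz | x \<le> t \<le> z}: by the Leibniz rule the derivative
  of this product takes the value D(e_xxz)(x,x,z) + D(e_xzz)(x,z,z) at every (x,t,z), while by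
  linearity its value at (x,t,z) is D(e_xtz)(x,t,z); comparing t = x and t = z kills both
  summands.\<close>

lemma mult3_e3_right:
  "mult3 h (e3 a b c) p q r =
     (if r = c \<and> p \<le> a \<and> a \<le> q \<and> q \<le> b \<and> b \<le> c then h p a b else 0)"
proof -
  let ?S = "{(y1, y2). p \<le> y1 \<and> y1 \<le> q \<and> q \<le> y2 \<and> y2 \<le> r}"
  have "(\<Sum>(y1, y2) \<in> ?S. h p y1 y2 * e3 a b c y1 y2 r)
      = (\<Sum>y \<in> ?S. if y = (a, b) then (if r = c then h p a b else 0) else 0)"
    by (rule sum.cong) (auto simp: e3_def split: if_splits)
  also have "\<dots> = (if (a, b) \<in> ?S then (if r = c then h p a b else 0) else 0)"
    by (simp add: sum.delta')
  finally show ?thesis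
    unfolding mult3_def by (auto intro: order_trans)
qed

lemma mult3_e3_left:
  "mult3 (e3 a b c) h p q r =
     (if p = a \<and> a \<le> b \<and> b \<le> q \<and> q \<le> c \<and> c \<le> r then h b c r else 0)"
proof -
  let ?S = "{(y1, y2). p \<le> y1 \<and> y1 \<le> q \<and> q \<le> y2 \<and> y2 \<le> r}"
  have "(\<Sum>(y1, y2) \<in> ?S. e3 a b c p y1 y2 * h y1 y2 r)
      = (\<Sum>y \<in> ?S. if y = (b, c) then (if p = a then h b c r else 0) else 0)"
    by (rule sum.cong) (auto simp: e3_def split: if_splits)
  also have "\<dots> = (if (b, c) \<in> ?S then (if p = a then h b c r else 0) else 0)"
    by (simp add: sum.delta')
  finally show ?thesis
    unfolding mult3_def by (auto intro: order_trans)
qed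

lemma mult3_e3_e3:
  "mult3 (e3 a b c) (e3 a' b' c') p q r =
     (if p = a \<and> a' = b \<and> b' = c \<and> r = c' \<and> a \<le> b \<and> b \<le> q \<and> q \<le> c \<and> c \<le> c'
      then 1 else 0)"
  unfolding mult3_e3_left by (auto simp: e3_def)

lemma e3_eq_mult3_e3: "a \<le> b \<Longrightarrow> b \<le> c \<Longrightarrow> e3 a b c = mult3 (e3 a b b) (e3 b b c)"
  by (intro ext) (simp only: mult3_e3_e3, auto simp: e3_def dest: order_antisym)

lemma mult3_e3_e3_eq_zero: "(a', b') \<noteq> (b, c) \<Longrightarrow> mult3 (e3 a b c) (e3 a' b' c') = zero3"
  by (intro ext) (auto simp: mult3_e3_e3 zero3_def)

lemma mult3_e3_e3_interval: "mult3 (e3 x x z) (e3 x z z) = (\<lambda>p q r. \<Sum>t\<in>{x..z}. e3 x t z p q r)"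
proof (intro ext)
  fix p q r
  have "(\<Sum>t\<in>{x..z}. e3 x t z p q r) = (\<Sum>t\<in>{x..z}. if t = q then e3 x q z p q r else 0)"
    by (rule sum.cong) (auto simp: e3_def split: if_splits)
  then show "mult3 (e3 x x z) (e3 x z z) p q r = (\<Sum>t\<in>{x..z}. e3 x t z p q r)"
    unfolding mult3_e3_e3 by (auto simp: e3_def)
qed

lemma e3_in_I3: "a \<le> b \<Longrightarrow> b \<le> c \<Longrightarrow> e3 a b c \<in> I3"
  unfolding I3_def e3_def by auto

lemma derivation3_closed: "derivation3 D \<Longrightarrow> f \<in> I3 \<Longrightarrow> D f \<in> I3"
  unfolding derivation3_def by blast

lemma derivation3_add: "derivation3 D \<Longrightarrow> f \<in> I3 \<Longrightarrow> g \<in> I3 \<Longrightarrow>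
    D (add3 f g) = add3 (D f) (D g)"
  unfolding derivation3_def by blast

lemma derivation3_mult: "derivation3 D \<Longrightarrow> f \<in> I3 \<Longrightarrow> g \<in> I3 \<Longrightarrow>
    D (mult3 f g) = add3 (mult3 (D f) g) (mult3 f (D g))"
  unfolding derivation3_def by blast

lemma derivation3_zero:
  assumes "derivation3 D"
  shows "D zero3 = zero3"
proof -
  have "zero3 \<in> I3"
    unfolding I3_def zero3_def by simp
  then have "D (smult3 0 zero3) = smult3 0 (D zero3)"
    using assms unfolding derivation3_def by blast
  then show ?thesis
    by (simp add: smult3_def zero3_def)
qed

lemma derivation3_sum:
  assumes D: "derivation3 D" and "finite T" and "\<forall>t\<in>T. G t \<in> I3"
  shows "D (\<lambda>a b c. \<Sum>t\<in>T. G t a b c) = (\<lambda>a b c. \<Sum>t\<in>T. D (G t) a b c)"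
  using assms(2,3)
proof (induction T rule: finite_induct)
  case empty
  then show ?case
    using derivation3_zero[OF D] by (simp add: zero3_def)
next
  case (insert s F)
  have "(\<lambda>a b c. \<Sum>t\<in>F. G t a b c) \<in> I3"
    using insert.prems unfolding I3_def by auto
  then have "D (add3 (G s) (\<lambda>a b c. \<Sum>t\<in>F. G t a b c))
      = add3 (D (G s)) (D (\<lambda>a b c. \<Sum>t\<in>F. G t a b c))"
    using derivation3_add[OF D] insert.prems by simp
  then show ?case
    using insert by (simp add: add3_def)
qed

lemma derivation3_mult3_e3_apply:
  assumes "derivation3 D" "a \<le> b" "b \<le> c" "a' \<le> b'" "b' \<le> c'"
  shows "D (mult3 (e3 a b c) (e3 a' b' c')) p q r =
    (if r = c' \<and> p \<le> a' \<and> a' \<le> q \<and> q \<le> b' then D (e3 a b c) p a' b' else 0) +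
    (if p = a \<and> b \<le> q \<and> q \<le> c \<and> c \<le> r then D (e3 a' b' c') b c r else 0)"
  using assms derivation3_mult[OF assms(1) e3_in_I3 e3_in_I3]
  by (simp add: add3_def mult3_e3_left mult3_e3_right)

lemma derivation3_e3_off_middle:
  assumes "derivation3 D" "a \<le> t" "t \<le> c" "q \<noteq> t"
  shows "D (e3 a t c) p q r = 0"
  using assms derivation3_mult3_e3_apply[of D a t t t t c p q r]
  by (auto simp: e3_eq_mult3_e3[symmetric] dest: order_antisym)

lemma derivation3_e3_endpoints:
  assumes D: "derivation3 D" and "x \<le> z"
  shows "D (e3 x x z) x x z = 0" and "D (e3 x z z) x z z = 0"
proof -
  let ?S = "mult3 (e3 x x z) (e3 x z z)"
  have sum_value: "D ?S x q z = D (e3 x q z) x q z" if "q \<in> {x..z}" for q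
  proof -
    have "D ?S = (\<lambda>p q r. \<Sum>t\<in>{x..z}. D (e3 x t z) p q r)"
      unfolding mult3_e3_e3_interval
      by (rule derivation3_sum[OF D]) (auto intro: e3_in_I3)
    moreover have "(\<Sum>t\<in>{x..z}. D (e3 x t z) x q z)
        = (\<Sum>t\<in>{x..z}. if t = q then D (e3 x q z) x q z else 0)"
      by (rule sum.cong) (auto simp: derivation3_e3_off_middle[OF D])
    ultimately show ?thesis
      using that by simp
  qed
  have leibniz_value: "D ?S x q z = D (e3 x x z) x x z + D (e3 x z z) x z z"
    if "q \<in> {x..z}" for q
    using that assms derivation3_mult3_e3_apply[OF D] by simp
  show "D (e3 x x z) x x z = 0"
    using sum_value[of z] leibniz_value[of z] \<open>x \<le> z\<close> by simp
  show "D (e3 x z z) x z z = 0"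
    using sum_value[of x] leibniz_value[of x] \<open>x \<le> z\<close> by simp
qed

lemma derivation3_e3_column:
  assumes D: "derivation3 D" and "x \<le> z"
  shows "D (e3 x z z) p z z = 0"
proof -
  consider "p = x" | "\<not> p \<le> z" | "p \<le> z" "p \<noteq> x"
    by blast
  then show ?thesis
  proof cases
    case 1
    then show ?thesis
      using derivation3_e3_endpoints(2)[OF assms] by simp
  next
    case 2
    then show ?thesis
      using derivation3_closed[OF D e3_in_I3] assms unfolding I3_def by auto
  next
    case 3
    have "D (mult3 (e3 p p z) (e3 x z z)) = zero3"
      using 3 by (simp add: mult3_e3_e3_eq_zero derivation3_zero[OF D])
    then have "D (mult3 (e3 p p z) (e3 x z z)) p p z = 0"
      by (simp add: zero3_def)
    then show ?thesis
      using 3 assms derivation3_mult3_e3_apply[OF D, of p p z x z z p p z]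
      by (simp add: order_eq_iff[symmetric])
  qed
qed

lemma derivation3_e3_row:
  assumes D: "derivation3 D" and "z \<le> y"
  shows "D (e3 z z y) z z r = 0"
proof -
  consider "r = y" | "\<not> z \<le> r" | "z \<le> r" "r \<noteq> y"
    by blast
  then show ?thesis
  proof cases
    case 1
    then show ?thesis
      using derivation3_e3_endpoints(1)[OF assms] by simp
  next
    case 2
    then show ?thesis
      using derivation3_closed[OF D e3_in_I3] assms unfolding I3_def by auto
  next
    case 3
    have "D (mult3 (e3 z z y) (e3 z r r)) = zero3"
      using 3 by (simp add: mult3_e3_e3_eq_zero derivation3_zero[OF D])
    then have "D (mult3 (e3 z z y) (e3 z r r)) z r r = 0"
      by (simp add: zero3_def)
    then show ?thesis
      using 3 assms derivation3_mult3_e3_apply[OF D, of z z y z r r z r r]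
      by (simp add: order_eq_iff[symmetric])
  qed
qed

lemma derivation3_e3_eq_zero:
  assumes D: "derivation3 D" and "x \<le> z" "z \<le> y"
  shows "D (e3 x z y) = zero3"
proof (intro ext)
  fix p q r
  have "D (e3 x z y) p q r = D (mult3 (e3 x z z) (e3 z z y)) p q r"
    by (simp only: e3_eq_mult3_e3[OF assms(2,3)])
  also have "\<dots> = 0"
    using derivation3_mult3_e3_apply[OF D] derivation3_e3_column[OF D] derivation3_e3_row[OF D] assms
    by simp
  finally show "D (e3 x z y) p q r = zero3 p q r"
    by (simp add: zero3_def)
qed

theorem corollary4p6:
  fixes D :: "('a::{finite,order}, 'r::comm_ring_1) fun3 \<Rightarrow> ('a, 'r) fun3"
    and x z y :: 'a
  assumes "derivation3 D"
    and "x < z" and "z < y"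
  shows "D (e3 x z y) = zero3"
  using assms by (simp add: derivation3_e3_eq_zero)

end
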